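(* Fix $a \geq 0$ and let $\mathfrak{g} = \mathfrak{r}'_{3,a}$, the three-dimensional Lie algebra with basis $\{e_1,e_2,e_3\}$ and nonzero brackets $[e_1,e_2]=ae_2-e_3$, $[e_1,e_3]=e_2+ae_3$. For every inner product $\langle\cdot,\cdot\rangle$ on $\mathfrak{g}$, there exist $\lambda \geq 1$, $k > 0$, and an orthonormal basis $\{x_1, x_2, x_3\}$ with respect to $k \langle\cdot,\cdot\rangle$ such that the bracket relations are given by \[ [x_1,x_2] = a x_2 - \lambda x_3 , \quad [x_1,x_3] = (1/\lambda) x_2 + a x_3 \] (and $[x_2,x_3]=0$). Furthermore, the matrix expression of the derivation algebra $\mathrm{Der}(\mathfrak{g})$ with respect to $\{x_1, x_2, x_3\}$ coincides with \[ \left\{ \begin{pmatrix} 0 & 0 & 0 \\ x_{21} & x_{22} & x_{23} \\ x_{31} & -\lambda^2 x_{23} & x_{22} \end{pmatrix} \;\middle|\; x_{21}, x_{22}, x_{23}, x_{31} \in \mathbb{R} \right\}. \] *)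

theory Defs
  imports "HOL-Analysis.Analysis"
begin

text \<open>The Lie algebra r'_{3,a} realised on real^3, with e_i the standard basis vectors
  (components 1,2,3). The bracket is the bilinear antisymmetric extension of
  [e1,e2] = a e2 - e3, [e1,e3] = e2 + a e3, [e2,e3] = 0.\<close>

definition e :: "3 \<Rightarrow> real^3" where
  "e i = axis i 1"

definition r3a_bracket :: "real \<Rightarrow> real^3 \<Rightarrow> real^3 \<Rightarrow> real^3" where
  "r3a_bracket a u v =
     (u$1 * v$2 - u$2 * v$1) *\<^sub>R (a *\<^sub>R e 2 - e 3)
   + (u$1 * v$3 - u$3 * v$1) *\<^sub>R (e 2 + a *\<^sub>R e 3)"

definition is_inner_product :: "(real^3 \<Rightarrow> real^3 \<Rightarrow> real) \<Rightarrow> bool" where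
  "is_inner_product ip \<longleftrightarrow> bilinear ip \<and> (\<forall>u v. ip u v = ip v u)
     \<and> (\<forall>u. u \<noteq> 0 \<longrightarrow> ip u u > 0)"

definition is_derivation :: "(real^3 \<Rightarrow> real^3 \<Rightarrow> real^3) \<Rightarrow> (real^3 \<Rightarrow> real^3) \<Rightarrow> bool" where
  "is_derivation br D \<longleftrightarrow> linear D \<and>
     (\<forall>u v. D (br u v) = br (D u) v + br u (D v))"

text \<open>Matrix M of the linear map D with respect to the basis x 1, x 2, x 3:
  D (x j) = sum_i M_{ij} x i (column j holds the coordinates of D (x j)).\<close>

definition matrix_wrt :: "(3 \<Rightarrow> real^3) \<Rightarrow> (real^3 \<Rightarrow> real^3) \<Rightarrow> real^3^3 \<Rightarrow> bool" where
  "matrix_wrt x D M \<longleftrightarrow> (\<forall>j. D (x j) = (\<Sum>i\<in>UNIV. M$i$j *\<^sub>R x i))"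

end

theory Submission
  imports Defs
begin

text \<open>The derived algebra n = span {e2, e3} is abelian, and bracketing with any u with
  first coordinate 1 acts on n as a + J, where J is the quarter turn (y, z) \<mapsto> (z, -y).
  Along the segment from e2 to e3 the function v \<mapsto> \<langle>v, J v\<rangle> changes sign (as J e2 = -e3
  and J e3 = e2), so some v \<in> n is orthogonal to J v; replacing v by J v if necessary,
  |v| \<le> |J v|. Rescaling v, -J v and the component of e1 orthogonal to n gives the basis,
  with \<lambda> = |J v| / |v|.

  The derivations are computed in any basis with these bracket relations: comparing
  coefficients in the Leibniz rule on pairs of basis vectors forces the stated shape, and
  conversely a matrix of that shape satisfies the Leibniz rule on basis pairs, hence everywhere,
  both sides being bilinear.\<close>

lemma linear_eqns:
  assumes "linear f"
  shows "f (u + v) = f u + f v" "f (u - v) = f u - f v" "f (c *\<^sub>R u) = c *\<^sub>R f u"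
    "f (- u) = - f u" "f 0 = 0"
  using assms by (simp_all add: linear_add linear_diff linear_scale linear_neg linear_0)

lemma bilinear_eqns:
  assumes "bilinear f"
  shows "f (u + v) w = f u w + f v w" "f u (v + w) = f u v + f u w"
    "f (u - v) w = f u w - f v w" "f u (v - w) = f u v - f u w"
    "f (c *\<^sub>R u) w = c *\<^sub>R f u w" "f u (c *\<^sub>R w) = c *\<^sub>R f u w"
    "f (- u) w = - f u w" "f u (- w) = - f u w" "f 0 w = 0" "f u 0 = 0"
  using assms by (simp_all add: bilinear_ladd bilinear_radd bilinear_lsub bilinear_rsub
      bilinear_lmul bilinear_rmul bilinear_lneg bilinear_rneg bilinear_lzero bilinear_rzero)


subsection \<open>Dual bases\<close>

definition dual_basis :: "('i::finite \<Rightarrow> 'v::real_vector) \<Rightarrow> ('i \<Rightarrow> 'v \<Rightarrow> real) \<Rightarrow> bool" where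
  "dual_basis x \<phi> \<longleftrightarrow> (\<forall>i. linear (\<phi> i)) \<and> (\<forall>i j. \<phi> i (x j) = (if i = j then 1 else 0))
     \<and> (\<forall>w. (\<Sum>i\<in>UNIV. \<phi> i w *\<^sub>R x i) = w)"

lemma dual_basisD:
  assumes "dual_basis x \<phi>"
  shows "linear (\<phi> i)" and "\<phi> i (x j) = (if i = j then 1 else 0)"
    and "(\<Sum>i\<in>UNIV. \<phi> i w *\<^sub>R x i) = w"
  using assms unfolding dual_basis_def by simp_all

lemma dual_basis_eqI:
  assumes "dual_basis x \<phi>" and "\<And>i. \<phi> i u = \<phi> i v"
  shows "u = v"
proof -
  have "u = (\<Sum>i\<in>UNIV. \<phi> i u *\<^sub>R x i)"
    by (rule dual_basisD(3)[OF assms(1), symmetric])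
  also have "\<dots> = (\<Sum>i\<in>UNIV. \<phi> i v *\<^sub>R x i)"
    by (simp only: assms(2))
  also have "\<dots> = v"
    by (rule dual_basisD(3)[OF assms(1)])
  finally show ?thesis .
qed

lemma bilinear_eq_on_dual_basis:
  fixes f g :: "'v::real_vector \<Rightarrow> 'v \<Rightarrow> 'w::real_vector"
  assumes "dual_basis x \<phi>" and "bilinear f" and "bilinear g"
    and "\<And>i j. f (x i) (x j) = g (x i) (x j)"
  shows "f u v = g u v"
proof -
  have "h u v = (\<Sum>(i, j)\<in>UNIV \<times> UNIV. (\<phi> i u * \<phi> j v) *\<^sub>R h (x i) (x j))"
    if "bilinear h" for h :: "'v \<Rightarrow> 'v \<Rightarrow> 'w"
  proof -
    have "h u v = h (\<Sum>i\<in>UNIV. \<phi> i u *\<^sub>R x i) (\<Sum>j\<in>UNIV. \<phi> j v *\<^sub>R x j)"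
      by (simp only: dual_basisD(3)[OF assms(1)])
    also have "\<dots> = (\<Sum>(i, j)\<in>UNIV \<times> UNIV. h (\<phi> i u *\<^sub>R x i) (\<phi> j v *\<^sub>R x j))"
      by (rule bilinear_sum[OF that])
    finally show ?thesis
      by (simp add: bilinear_lmul[OF that] bilinear_rmul[OF that] case_prod_beta mult.commute)
  qed
  from this[OF assms(2)] this[OF assms(3)] show ?thesis
    by (simp add: assms(4))
qed

lemma linear_extension_dual_basis:
  assumes "dual_basis x \<phi>"
  shows "linear (\<lambda>w. \<Sum>i\<in>UNIV. \<phi> i w *\<^sub>R y i)" and "(\<Sum>i\<in>UNIV. \<phi> i (x j) *\<^sub>R y i) = y j"
proof -
  have "\<phi> i (x j) *\<^sub>R y i = (if i = j then y i else 0)" for i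
    by (simp add: dual_basisD(2)[OF assms])
  then show "(\<Sum>i\<in>UNIV. \<phi> i (x j) *\<^sub>R y i) = y j"
    by simp
  show "linear (\<lambda>w. \<Sum>i\<in>UNIV. \<phi> i w *\<^sub>R y i)"
    using dual_basisD(1)[OF assms]
    by (auto intro!: linear_compose_sum linear_compose[OF _ linear_scaleR_left, unfolded o_def])
qed

lemma orthonormal_dual_basis:
  fixes x :: "'i::finite \<Rightarrow> 'v::euclidean_space" and B :: "'v \<Rightarrow> 'v \<Rightarrow> real"
  assumes B: "bilinear B" and dim: "DIM('v) = CARD('i)"
    and orth: "\<And>i j. B (x i) (x j) = (if i = j then 1 else 0)"
  shows "dual_basis x (\<lambda>i w. B w (x i))"
proof -
  have lin: "linear (\<lambda>w. B w (x i))" for i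
    using B by (simp add: bilinear_def)
  have coord: "B (\<Sum>j\<in>UNIV. c j *\<^sub>R x j) (x i) = c i" for c i
    by (simp add: linear_sum[OF lin] linear_scale[OF lin] orth if_distrib cong: if_cong)
  have "inj x"
  proof (rule injI)
    fix i j assume "x i = x j"
    then have "B (x i) (x i) = B (x j) (x i)"
      by simp
    then show "i = j"
      by (simp add: orth split: if_splits)
  qed
  then have sum_range: "(\<Sum>v\<in>range x. f v) = (\<Sum>i\<in>UNIV. f (x i))" for f :: "'v \<Rightarrow> 'a::comm_monoid_add"
    by (simp add: sum.reindex)
  have "independent (range x)"
  proof (rule independent_if_scalars_zero)
    fix f v assume "(\<Sum>v\<in>range x. f v *\<^sub>R v) = 0" and "v \<in> range x"
    then show "f v = 0"
      using coord[of "f \<circ> x"] by (auto simp: sum_range B bilinear_lzero)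
  qed simp
  moreover have "card (range x) = dim (UNIV :: 'v set)"
    using \<open>inj x\<close> dim by (simp add: card_image)
  ultimately have span: "UNIV \<subseteq> span (range x)"
    using card_ge_dim_independent[of "range x" UNIV] by simp
  have expansion: "(\<Sum>i\<in>UNIV. B w (x i) *\<^sub>R x i) = w" for w
  proof -
    have "w \<in> span (range x)"
      using span by blast
    then obtain c where "w = (\<Sum>i\<in>UNIV. c (x i) *\<^sub>R x i)"
      by (auto simp: span_finite sum_range)
    then show ?thesis
      using coord[of "c \<circ> x"] by simp
  qed
  have "B (x j) (x i) = (if i = j then 1 else 0)" for i j
    using orth[of j i] by simp
  then show ?thesis
    unfolding dual_basis_def by (intro conjI allI lin expansion)
qed


subsection \<open>Derivations of the normal form\<close>

text \<open>When the antisymmetry premise of the following lemmas is discharged by a schematic fact,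
  br has to be instantiated first: plain OF lifts the conclusion over the bound variables
  of that premise.\<close>

lemma antisym_self_eq_0:
  fixes br :: "'u \<Rightarrow> 'u \<Rightarrow> 'v::real_vector"
  assumes antisym: "\<And>u v. br v u = - br u v"
  shows "br u u = 0"
proof -
  have "br u u + br u u = 0"
    using antisym[of u u] by (rule eq_neg_iff_add_eq_0[THEN iffD1])
  then have "(2::real) *\<^sub>R br u u = 0"
    by (simp add: scaleR_2)
  then show ?thesis
    by simp
qed

lemma leibniz_rule_swap:
  assumes lin: "linear D" and antisym: "\<And>u v. br v u = - br u v"
    and leibniz: "D (br u v) = br (D u) v + br u (D v)"
  shows "D (br v u) = br (D v) u + br v (D u)"
proof -
  have "D (br v u) = - D (br u v)"
    using antisym[of u v] by (simp add: linear_neg[OF lin])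
  also have "\<dots> = br (D v) u + br v (D u)"
    using antisym[of u "D v"] antisym[of "D u" v] by (simp add: leibniz)
  finally show ?thesis .
qed

lemma leibniz_rule_diagonal:
  assumes lin: "linear D" and antisym: "\<And>u v. br v u = - br u v"
  shows "D (br u u) = br (D u) u + br u (D u)"
  using antisym[of u "D u"]
  by (simp add: antisym_self_eq_0[where br = br, OF antisym] linear_0[OF lin])

lemma is_derivation_if_on_dual_basis:
  assumes basis: "dual_basis x \<phi>" and br: "bilinear br" and lin: "linear D"
    and leibniz: "\<And>i j. D (br (x i) (x j)) = br (D (x i)) (x j) + br (x i) (D (x j))"
  shows "is_derivation br D"
proof -
  have "bilinear (\<lambda>u v. D (br u v))"
    using br unfolding bilinear_def by (auto intro!: linear_compose[OF _ lin, unfolded o_def])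
  moreover have "bilinear (\<lambda>u v. br (D u) v + br u (D v))"
    using br unfolding bilinear_def
    by (auto intro!: linear_compose_add linear_compose[OF lin, unfolded o_def])
  ultimately show ?thesis
    using bilinear_eq_on_dual_basis[where f = "\<lambda>u v. D (br u v)" and g = "\<lambda>u v. br (D u) v + br u (D v)",
        OF basis _ _ leibniz] lin
    by (simp add: is_derivation_def)
qed

context
  fixes br :: "real^3 \<Rightarrow> real^3 \<Rightarrow> real^3" and x :: "3 \<Rightarrow> real^3" and \<phi> :: "3 \<Rightarrow> real^3 \<Rightarrow> real"
    and a l :: real
  assumes br: "bilinear br" and antisym: "\<And>u v. br v u = - br u v"
    and basis: "dual_basis x \<phi>" and l: "l \<noteq> 0"
    and br12: "br (x 1) (x 2) = a *\<^sub>R x 2 - l *\<^sub>R x 3"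
    and br13: "br (x 1) (x 3) = (1 / l) *\<^sub>R x 2 + a *\<^sub>R x 3"
    and br23: "br (x 2) (x 3) = 0"
begin

lemma normal_form_self_bracket: "br w w = 0"
  by (rule antisym_self_eq_0[where br = br, OF antisym])

lemma derivation_matrix_shape:
  assumes D: "is_derivation br D" and M: "matrix_wrt x D M"
  shows "M$1$1 = 0 \<and> M$1$2 = 0 \<and> M$1$3 = 0 \<and> M$3$3 = M$2$2 \<and> M$3$2 = - (l\<^sup>2) * M$2$3"
proof -
  have lin: "linear D" and leibniz: "\<And>u v. D (br u v) = br (D u) v + br u (D v)"
    using D by (auto simp: is_derivation_def)
  have Dx: "D (x j) = M$1$j *\<^sub>R x 1 + M$2$j *\<^sub>R x 2 + M$3$j *\<^sub>R x 3" for j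
    using M by (simp add: matrix_wrt_def sum_3)
  have swapped: "br (x 2) (x 1) = - (a *\<^sub>R x 2 - l *\<^sub>R x 3)"
    "br (x 3) (x 1) = - ((1 / l) *\<^sub>R x 2 + a *\<^sub>R x 3)" "br (x 3) (x 2) = 0"
    using antisym[of "x 1" "x 2"] antisym[of "x 1" "x 3"] antisym[of "x 2" "x 3"]
    by (simp_all add: br12 br13 br23)
  have coeff: "\<phi> m (D (br (x i) (x j))) = \<phi> m (br (D (x i)) (x j) + br (x i) (D (x j)))" for m i j
    by (simp add: leibniz)
  note simps = br12 br13 br23 swapped normal_form_self_bracket Dx linear_eqns[OF lin]
    bilinear_eqns[OF br] linear_eqns[OF dual_basisD(1)[OF basis]] dual_basisD(2)[OF basis]
  have "M$1$2 = l * a * M$1$3"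
    using coeff[of 2 2 3] l by (simp add: simps field_simps)
  moreover have "a * M$1$2 + l * M$1$3 = 0"
    using coeff[of 3 2 3] l by (simp add: simps field_simps)
  ultimately have "l * (a\<^sup>2 + 1) * M$1$3 = 0"
    by (simp add: power2_eq_square algebra_simps)
  moreover have "a\<^sup>2 + 1 \<noteq> 0"
    using zero_le_power2[of a] by linarith
  ultimately have m13: "M$1$3 = 0"
    using l by simp
  have "l * M$3$3 = l * (M$1$1 + M$2$2)"
    using coeff[of 3 1 2] by (simp add: simps algebra_simps)
  then have "M$3$3 = M$1$1 + M$2$2"
    using l by simp
  moreover have "M$2$2 = M$1$1 + M$3$3"
    using coeff[of 2 1 3] l by (simp add: simps field_simps)
  moreover have "M$3$2 = l * a * M$1$1 - l\<^sup>2 * M$2$3"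
    using coeff[of 3 1 3] l by (simp add: simps field_simps power2_eq_square)
  ultimately show ?thesis
    using \<open>M$1$2 = l * a * M$1$3\<close> m13 by simp
qed

lemma derivation_of_matrix_shape:
  "\<exists>D. is_derivation br D
     \<and> matrix_wrt x D (vector [vector [0, 0, 0], vector [x21, x22, x23], vector [x31, - (l\<^sup>2) * x23, x22]])"
  (is "\<exists>D. _ \<and> matrix_wrt x D ?M")
proof -
  define D where "D w = (\<Sum>j\<in>UNIV. \<phi> j w *\<^sub>R (\<Sum>i\<in>UNIV. ?M$i$j *\<^sub>R x i))" for w
  have lin: "linear D" and Dx: "D (x j) = (\<Sum>i\<in>UNIV. ?M$i$j *\<^sub>R x i)" for j
    unfolding D_def by (rule linear_extension_dual_basis[OF basis])+
  have columns: "D (x 1) = x21 *\<^sub>R x 2 + x31 *\<^sub>R x 3"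
    "D (x 2) = x22 *\<^sub>R x 2 - (l\<^sup>2 * x23) *\<^sub>R x 3" "D (x 3) = x23 *\<^sub>R x 2 + x22 *\<^sub>R x 3"
    by (simp_all add: Dx sum_3)
  note simps = br12 br13 br23 columns normal_form_self_bracket linear_eqns[OF lin]
    bilinear_eqns[OF br] linear_eqns[OF dual_basisD(1)[OF basis]] dual_basisD(2)[OF basis]
  have leibniz12: "D (br (x 1) (x 2)) = br (D (x 1)) (x 2) + br (x 1) (D (x 2))"
    by (rule dual_basis_eqI[OF basis])
      (use l in \<open>simp add: simps antisym[of "x 3" "x 2"] field_simps power2_eq_square\<close>)
  have leibniz13: "D (br (x 1) (x 3)) = br (D (x 1)) (x 3) + br (x 1) (D (x 3))"
    by (rule dual_basis_eqI[OF basis])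
      (use l in \<open>simp add: simps antisym[of "x 3" "x 2"] field_simps power2_eq_square\<close>)
  have leibniz23: "D (br (x 2) (x 3)) = br (D (x 2)) (x 3) + br (x 2) (D (x 3))"
    by (rule dual_basis_eqI[OF basis])
      (use l in \<open>simp add: simps antisym[of "x 1" "x 2"] antisym[of "x 1" "x 3"] field_simps\<close>)
  have "\<forall>i j. D (br (x i) (x j)) = br (D (x i)) (x j) + br (x i) (D (x j))"
    by (simp add: forall_3 leibniz12 leibniz13 leibniz23
        leibniz_rule_diagonal[where br = br, OF lin antisym]
        leibniz_rule_swap[where br = br, OF lin antisym leibniz12]
        leibniz_rule_swap[where br = br, OF lin antisym leibniz13]
        leibniz_rule_swap[where br = br, OF lin antisym leibniz23])
  then have "is_derivation br D"
    using is_derivation_if_on_dual_basis[OF basis br lin] by blast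
  moreover have "matrix_wrt x D ?M"
    by (simp add: matrix_wrt_def Dx)
  ultimately show ?thesis
    by blast
qed

lemma derivation_matrices_normal_form:
  "{M. \<exists>D. is_derivation br D \<and> matrix_wrt x D M}
     = {vector [vector [0, 0, 0], vector [x21, x22, x23], vector [x31, - (l\<^sup>2) * x23, x22]]
         | x21 x22 x23 x31. True}"
proof (intro set_eqI iffI)
  fix M :: "real^3^3" assume "M \<in> {M. \<exists>D. is_derivation br D \<and> matrix_wrt x D M}"
  then obtain D where "is_derivation br D" and "matrix_wrt x D M"
    by blast
  then have "M$1$1 = 0 \<and> M$1$2 = 0 \<and> M$1$3 = 0 \<and> M$3$3 = M$2$2 \<and> M$3$2 = - (l\<^sup>2) * M$2$3"
    by (rule derivation_matrix_shape)
  then have "M = vector [vector [0, 0, 0], vector [M$2$1, M$2$2, M$2$3],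
      vector [M$3$1, - (l\<^sup>2) * M$2$3, M$2$2]]"
    by (simp add: vec_eq_iff forall_3)
  then show "M \<in> {vector [vector [0, 0, 0], vector [x21, x22, x23], vector [x31, - (l\<^sup>2) * x23, x22]]
      | x21 x22 x23 x31. True}"
    by blast
next
  fix M :: "real^3^3"
  assume "M \<in> {vector [vector [0, 0, 0], vector [x21, x22, x23], vector [x31, - (l\<^sup>2) * x23, x22]]
      | x21 x22 x23 x31. True}"
  then show "M \<in> {M. \<exists>D. is_derivation br D \<and> matrix_wrt x D M}"
    using derivation_of_matrix_shape by blast
qed

end


subsection \<open>A normal basis for every inner product\<close>

lemma r3a_bracket_bilinear: "bilinear (r3a_bracket a)"
  unfolding bilinear_def
  by (auto intro!: linearI simp: r3a_bracket_def vec_eq_iff algebra_simps)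

lemma r3a_bracket_antisym: "r3a_bracket a v u = - r3a_bracket a u v"
  by (simp add: r3a_bracket_def vec_eq_iff algebra_simps)

lemma e_nth [simp]: "e i $ j = (if j = i then 1 else 0)"
  by (simp add: e_def axis_def)

definition quarter_turn :: "real^3 \<Rightarrow> real^3" where
  "quarter_turn v = v$3 *\<^sub>R e 2 - v$2 *\<^sub>R e 3"

lemma quarter_turn_nth_1 [simp]: "quarter_turn v $ 1 = 0"
  by (simp add: quarter_turn_def)

lemma quarter_turn_scaleR: "quarter_turn (c *\<^sub>R v) = c *\<^sub>R quarter_turn v"
  by (simp add: quarter_turn_def vec_eq_iff forall_3)

lemma quarter_turn_uminus: "quarter_turn (- v) = - quarter_turn v"
  by (simp add: quarter_turn_def vec_eq_iff forall_3)

lemma quarter_turn_quarter_turn: "v$1 = 0 \<Longrightarrow> quarter_turn (quarter_turn v) = - v"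
  by (simp add: quarter_turn_def vec_eq_iff forall_3)

lemma quarter_turn_eq_0_iff: "v$1 = 0 \<Longrightarrow> quarter_turn v = 0 \<longleftrightarrow> v = 0"
  by (auto simp: quarter_turn_def vec_eq_iff forall_3)

lemma r3a_bracket_quarter_turn:
  "u$1 = 1 \<Longrightarrow> v$1 = 0 \<Longrightarrow> r3a_bracket a u v = a *\<^sub>R v + quarter_turn v"
  by (simp add: r3a_bracket_def quarter_turn_def vec_eq_iff forall_3 algebra_simps)

lemma r3a_bracket_derived_abelian:
  "u$1 = 0 \<Longrightarrow> v$1 = 0 \<Longrightarrow> r3a_bracket a u v = 0"
  by (simp add: r3a_bracket_def vec_eq_iff forall_3)

lemma exists_quarter_turn_orthogonal:
  fixes B :: "real^3 \<Rightarrow> real^3 \<Rightarrow> real"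
  assumes B: "bilinear B" and sym: "\<And>u v. B u v = B v u"
  shows "\<exists>v. v$1 = 0 \<and> v \<noteq> 0 \<and> B v (quarter_turn v) = 0"
proof -
  define v where "v t = (1 - t) *\<^sub>R e 2 + t *\<^sub>R e 3" for t
  define g where "g t = B (v t) (quarter_turn (v t))" for t
  have g: "g t = (B (e 2) (e 2) - B (e 3) (e 3)) * t * (1 - t) + B (e 2) (e 3) * (2 * t - 1)" for t
    by (simp add: g_def v_def quarter_turn_def bilinear_eqns[OF B] sym[of "e 3" "e 2"] algebra_simps)
  have "\<forall>t. 0 \<le> t \<and> t \<le> 1 \<longrightarrow> isCont g t"
    unfolding g by (auto intro!: continuous_intros)
  moreover have "g 0 = - g 1"
    by (simp add: g)
  ultimately obtain t where "g t = 0"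
    using IVT[of g 0 0 1] IVT2[of g 1 0 0] by (cases "g 1 \<ge> 0") force+
  moreover have "v t $ 1 = 0"
    by (simp add: v_def)
  moreover have "v t \<noteq> 0"
  proof
    assume "v t = 0"
    moreover have "v t $ 2 + v t $ 3 = 1"
      by (simp add: v_def)
    ultimately show False
      by simp
  qed
  ultimately show ?thesis
    unfolding g_def by blast
qed

definition r3a_normal_basis ::
    "real \<Rightarrow> (real^3 \<Rightarrow> real^3 \<Rightarrow> real) \<Rightarrow> real \<Rightarrow> real \<Rightarrow> (3 \<Rightarrow> real^3) \<Rightarrow> bool" where
  "r3a_normal_basis a ip l k x \<longleftrightarrow> l \<ge> 1 \<and> k > 0
     \<and> (\<forall>i j. k * ip (x i) (x j) = (if i = j then 1 else 0))
     \<and> r3a_bracket a (x 1) (x 2) = a *\<^sub>R x 2 - l *\<^sub>R x 3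
     \<and> r3a_bracket a (x 1) (x 3) = (1 / l) *\<^sub>R x 2 + a *\<^sub>R x 3
     \<and> r3a_bracket a (x 2) (x 3) = 0"

lemma r3a_normal_basis_of_orthogonal_pair:
  assumes ip: "is_inner_product ip" and v: "v$1 = 0" "v \<noteq> 0"
    and orth: "ip v (quarter_turn v) = 0" and le: "ip v v \<le> ip (quarter_turn v) (quarter_turn v)"
  shows "\<exists>l k x. r3a_normal_basis a ip l k x"
proof -
  have pos: "w \<noteq> 0 \<Longrightarrow> ip w w > 0" and sym: "ip w z = ip z w" and bil: "bilinear ip" for w z
    using ip by (auto simp: is_inner_product_def)
  note ip_eqns = bilinear_eqns[OF bil]
  define u where "u = quarter_turn v"
  have u: "u$1 = 0" "u \<noteq> 0" "quarter_turn u = - v"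
    using v by (simp_all add: u_def quarter_turn_eq_0_iff quarter_turn_quarter_turn)
  have uv: "ip u v = 0" "ip v u = 0"
    using orth sym by (simp_all add: u_def)
  define x1 where "x1 = e 1 - (ip (e 1) v / ip v v) *\<^sub>R v - (ip (e 1) u / ip u u) *\<^sub>R u"
    \<comment> \<open>projecting onto span {u, v} keeps the first coordinate 1, so x1 still acts as a + J\<close>
  have x1: "x1$1 = 1" "ip x1 v = 0" "ip x1 u = 0"
    using v u pos[of v] pos[of u] by (simp_all add: x1_def ip_eqns uv)
  define n where "n = sqrt (ip x1 x1)"
  define \<alpha> where "\<alpha> = sqrt (ip v v)"
  define \<beta> where "\<beta> = sqrt (ip u u)"
  have "x1 \<noteq> 0"
    using x1 by auto
  then have "ip x1 x1 > 0" "ip v v > 0" "ip u u > 0"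
    using pos v u by simp_all
  then have norms: "n > 0" "\<alpha> > 0" "\<beta> > 0" "ip x1 x1 = n\<^sup>2" "ip v v = \<alpha>\<^sup>2" "ip u u = \<beta>\<^sup>2"
    by (simp_all add: n_def \<alpha>_def \<beta>_def)
  define x :: "3 \<Rightarrow> real^3" where
    "x i = (if i = 1 then x1 else if i = 2 then (n / \<alpha>) *\<^sub>R v else (- n / \<beta>) *\<^sub>R u)" for i
  define l where "l = \<beta> / \<alpha>"
  have "\<alpha>\<^sup>2 \<le> \<beta>\<^sup>2"
    using le norms by (simp add: u_def)
  then have "\<alpha> \<le> \<beta>"
    by (rule power2_le_imp_le) (use norms in simp)
  then have "l \<ge> 1"
    using norms by (simp add: l_def le_divide_eq)
  moreover have "1 / n\<^sup>2 > 0"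
    using norms by simp
  moreover have "(1 / n\<^sup>2) * ip (x i) (x j) = (if i = j then 1 else 0)" for i j
    using exhaust_3[of i] exhaust_3[of j] norms
    by (auto simp: x_def ip_eqns x1 uv sym[of v x1] sym[of u x1] power2_eq_square)
  moreover have "r3a_bracket a (x 1) (x 2) = a *\<^sub>R x 2 - l *\<^sub>R x 3"
    using norms by (simp add: x_def r3a_bracket_quarter_turn x1 v quarter_turn_scaleR u_def l_def)
  moreover have "r3a_bracket a (x 1) (x 3) = (1 / l) *\<^sub>R x 2 + a *\<^sub>R x 3"
    using norms
    by (simp add: x_def r3a_bracket_quarter_turn x1 u quarter_turn_scaleR quarter_turn_uminus l_def)
  moreover have "r3a_bracket a (x 2) (x 3) = 0"
    by (simp add: x_def r3a_bracket_derived_abelian u v)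
  ultimately show ?thesis
    unfolding r3a_normal_basis_def by blast
qed

lemma exists_r3a_normal_basis:
  assumes ip: "is_inner_product ip"
  shows "\<exists>l k x. r3a_normal_basis a ip l k x"
proof -
  have bil: "bilinear ip" and sym: "\<And>u w. ip u w = ip w u"
    using ip by (auto simp: is_inner_product_def)
  obtain v where v: "v$1 = 0" "v \<noteq> 0" "ip v (quarter_turn v) = 0"
    using exists_quarter_turn_orthogonal[where B = ip, OF bil sym] by blast
  show ?thesis
  proof (cases "ip v v \<le> ip (quarter_turn v) (quarter_turn v)")
    case True
    then show ?thesis
      by (rule r3a_normal_basis_of_orthogonal_pair[OF ip v])
  next
    case False
    have vv: "quarter_turn (quarter_turn v) = - v"
      by (rule quarter_turn_quarter_turn[OF v(1)])
    show ?thesis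
    proof (rule r3a_normal_basis_of_orthogonal_pair[OF ip])
      show "quarter_turn v $ 1 = 0" and "quarter_turn v \<noteq> 0"
        using v by (simp_all add: quarter_turn_eq_0_iff)
      show "ip (quarter_turn v) (quarter_turn (quarter_turn v)) = 0"
        using v(3) sym[of v "quarter_turn v"] by (simp add: vv bilinear_eqns[OF bil])
      show "ip (quarter_turn v) (quarter_turn v)
          \<le> ip (quarter_turn (quarter_turn v)) (quarter_turn (quarter_turn v))"
        using False by (simp add: vv bilinear_eqns[OF bil])
    qed
  qed
qed

theorem proposition4p10:
  fixes a :: real and ip :: "real^3 \<Rightarrow> real^3 \<Rightarrow> real"
  assumes "a \<ge> 0" and "is_inner_product ip"
  shows "\<exists>l k (x :: 3 \<Rightarrow> real^3). l \<ge> 1 \<and> k > 0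
     \<and> (\<forall>i j. k * ip (x i) (x j) = (if i = j then 1 else 0))
     \<and> r3a_bracket a (x 1) (x 2) = a *\<^sub>R x 2 - l *\<^sub>R x 3
     \<and> r3a_bracket a (x 1) (x 3) = (1 / l) *\<^sub>R x 2 + a *\<^sub>R x 3
     \<and> r3a_bracket a (x 2) (x 3) = 0
     \<and> {M. \<exists>D. is_derivation (r3a_bracket a) D \<and> matrix_wrt x D M}
       = {vector [vector [0, 0, 0], vector [x21::real, x22, x23], vector [x31, - (l\<^sup>2) * x23, x22]]
           | x21 x22 x23 x31. True}"
proof -
  obtain l k x where "r3a_normal_basis a ip l k x"
    using exists_r3a_normal_basis[OF assms(2)] by blast
  then have l: "l \<ge> 1" and k: "k > 0" and orth: "\<forall>i j. k * ip (x i) (x j) = (if i = j then 1 else 0)"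
    and brackets: "r3a_bracket a (x 1) (x 2) = a *\<^sub>R x 2 - l *\<^sub>R x 3"
      "r3a_bracket a (x 1) (x 3) = (1 / l) *\<^sub>R x 2 + a *\<^sub>R x 3" "r3a_bracket a (x 2) (x 3) = 0"
    unfolding r3a_normal_basis_def by simp_all
  have "bilinear ip"
    using assms(2) by (simp add: is_inner_product_def)
  then have "bilinear (\<lambda>u w. k * ip u w)"
    unfolding bilinear_def by (simp add: linear_iff bilinear_eqns algebra_simps)
  then have "dual_basis x (\<lambda>i w. k * ip w (x i))"
    using orth by (intro orthonormal_dual_basis) simp_all
  then have "{M. \<exists>D. is_derivation (r3a_bracket a) D \<and> matrix_wrt x D M}
      = {vector [vector [0, 0, 0], vector [x21, x22, x23], vector [x31, - (l\<^sup>2) * x23, x22]]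
           | x21 x22 x23 x31. True}"
    using l by (intro derivation_matrices_normal_form[OF r3a_bracket_bilinear r3a_bracket_antisym _ _ brackets])
      auto
  then show ?thesis
    using l k orth brackets by blast
qed

end
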